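(* Let $R$ be a ring and let $A$ be a left localization of $R$, i.e. $A=S'^{-1}R$ for some $S'\in\mathrm{Den}_l(R,\mathfrak a)$, $\mathfrak a\in\mathrm{Ass}_l(R)$. Then $A$ is a maximal left quotient ring of $R$ if and only if $Q_l(A)=A$ and $\mathrm{Ass}_l(A)=\{0\}$, i.e. $A$ is a left localization maximal ring.
   Context: Rings are associative with $1$. A multiplicatively closed subset $S$ ($1\in S$, $0\notin S$) is a left Ore set if $Sr\cap Rs\ne\emptyset$ for all $r\in R,s\in S$; $\mathrm{ass}(S):=\{r\mid sr=0\text{ for some }s\in S\}$; it is a left denominator set if moreover $rs=0$ ($s\in S$) implies $tr=0$ for some $t\in S$. $\mathrm{Den}_l(R)$ is the set of left denominator sets, $\mathrm{Ass}_l(R)=\{\mathrm{ass}(S)\mid S\in\mathrm{Den}_l(R)\}$, $\mathrm{Den}_l(R,\mathfrak a)=\{S\mid\mathrm{ass}(S)=\mathfrak a\}$. The left localizations $S^{-1}R$, $S\in\mathrm{Den}_l(R)$, form a poset in which $S_1^{-1}R\to S_2^{-1}R$ whenever $S_1\subseteq S_2$ (via the natural map $s^{-1}r\mapsto s^{-1}r$); its maximal elements, the maximal left quotient rings of $R$, are exactly the rings $S^{-1}R$ with $S$ a maximal element of $(\mathrm{Den}_l(R),\subseteq)$. For a ring $B$, $Q_l(B):=S_0(B)^{-1}B$ where $S_0(B)$ is the largest element of $\mathrm{Den}_l(B,0)$. A ring $B$ is a left localization maximal ring if $Q_l(B)=B$ and $\mathrm{Ass}_l(B)=\{0\}$. 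*)

theory Defs
  imports "HOL-Algebra.Ring" "HOL-Algebra.RingHom"
begin

definition mult_closed :: "('a, 'm) ring_scheme \<Rightarrow> 'a set \<Rightarrow> bool" where
  "mult_closed R S \<longleftrightarrow> S \<subseteq> carrier R \<and> \<one>\<^bsub>R\<^esub> \<in> S \<and> \<zero>\<^bsub>R\<^esub> \<notin> S \<and>
     (\<forall>s\<in>S. \<forall>t\<in>S. s \<otimes>\<^bsub>R\<^esub> t \<in> S)"

definition left_ore :: "('a, 'm) ring_scheme \<Rightarrow> 'a set \<Rightarrow> bool" where
  "left_ore R S \<longleftrightarrow> mult_closed R S \<and>
     (\<forall>r\<in>carrier R. \<forall>s\<in>S. \<exists>s'\<in>S. \<exists>r'\<in>carrier R. s' \<otimes>\<^bsub>R\<^esub> r = r' \<otimes>\<^bsub>R\<^esub> s)"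

definition ass :: "('a, 'm) ring_scheme \<Rightarrow> 'a set \<Rightarrow> 'a set" where
  "ass R S = {r \<in> carrier R. \<exists>s\<in>S. s \<otimes>\<^bsub>R\<^esub> r = \<zero>\<^bsub>R\<^esub>}"

definition left_den :: "('a, 'm) ring_scheme \<Rightarrow> 'a set \<Rightarrow> bool" where
  "left_den R S \<longleftrightarrow> left_ore R S \<and>
     (\<forall>r\<in>carrier R. \<forall>s\<in>S. r \<otimes>\<^bsub>R\<^esub> s = \<zero>\<^bsub>R\<^esub> \<longrightarrow> (\<exists>t\<in>S. t \<otimes>\<^bsub>R\<^esub> r = \<zero>\<^bsub>R\<^esub>))"

definition Den_l :: "('a, 'm) ring_scheme \<Rightarrow> 'a set set" where
  "Den_l R = {S. left_den R S}"

definition Ass_l :: "('a, 'm) ring_scheme \<Rightarrow> 'a set set" where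
  "Ass_l R = ass R ` Den_l R"

definition Den_l_at :: "('a, 'm) ring_scheme \<Rightarrow> 'a set \<Rightarrow> 'a set set" where
  "Den_l_at R \<aa> = {S \<in> Den_l R. ass R S = \<aa>}"

text \<open>(A, sigma) is a left localization S^{-1}R of R at S (left ring of fractions),
  given by the standard defining properties: sigma is a ring homomorphism,
  sigma(S) consists of units, every element is sigma(s)^{-1} sigma(r), and
  the kernel of sigma is ass(S). This determines S^{-1}R up to a unique
  isomorphism over R.\<close>
definition is_left_localization ::
  "('a, 'm) ring_scheme \<Rightarrow> 'a set \<Rightarrow> ('b, 'n) ring_scheme \<Rightarrow> ('a \<Rightarrow> 'b) \<Rightarrow> bool" where
  "is_left_localization R S A \<sigma> \<longleftrightarrow>
     ring A \<and> \<sigma> \<in> ring_hom R A \<and>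
     (\<forall>s\<in>S. \<sigma> s \<in> Units A) \<and>
     (\<forall>a\<in>carrier A. \<exists>s\<in>S. \<exists>r\<in>carrier R. a = inv\<^bsub>A\<^esub> (\<sigma> s) \<otimes>\<^bsub>A\<^esub> \<sigma> r) \<and>
     {r \<in> carrier R. \<sigma> r = \<zero>\<^bsub>A\<^esub>} = ass R S"

definition maximal_den :: "('a, 'm) ring_scheme \<Rightarrow> 'a set \<Rightarrow> bool" where
  "maximal_den R S \<longleftrightarrow> S \<in> Den_l R \<and> (\<forall>T\<in>Den_l R. S \<subseteq> T \<longrightarrow> T = S)"

definition max_left_quotient_ring ::
  "('a, 'm) ring_scheme \<Rightarrow> ('b, 'n) ring_scheme \<Rightarrow> ('a \<Rightarrow> 'b) \<Rightarrow> bool" where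
  "max_left_quotient_ring R A \<sigma> \<longleftrightarrow>
     (\<exists>S. maximal_den R S \<and> is_left_localization R S A \<sigma>)"

text \<open>Q_l(B) = B: with S_0(B) the largest element of Den_l(B,0), the natural map
  B -> S_0(B)^{-1}B (the identity) realizes the localization.\<close>
definition Ql_eq_self :: "('b, 'n) ring_scheme \<Rightarrow> bool" where
  "Ql_eq_self B \<longleftrightarrow>
     (\<exists>S0. S0 \<in> Den_l_at B {\<zero>\<^bsub>B\<^esub>} \<and> (\<forall>T\<in>Den_l_at B {\<zero>\<^bsub>B\<^esub>}. T \<subseteq> S0) \<and>
           is_left_localization B S0 B id)"

definition left_localization_maximal :: "('b, 'n) ring_scheme \<Rightarrow> bool" where
  "left_localization_maximal B \<longleftrightarrow> Ql_eq_self B \<and> Ass_l B = {{\<zero>\<^bsub>B\<^esub>}}"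

end

theory Submission
  imports Defs
begin

text \<open>A nontrivial ring is left localization maximal iff all its left denominator sets
  consist of units. If \<open>S\<close> is maximal and \<open>T \<in> Den_l(S\<^sup>-\<^sup>1R)\<close>, the elements \<open>r\<close> of \<open>R\<close>
  with \<open>b \<sigma>(r) \<in> T\<close> for some \<open>b\<close> and such that \<open>x \<sigma>(r) = 0\<close> only for \<open>x\<close> annihilated
  from the left by \<open>T\<close>, form a left denominator set containing \<open>S\<close>, hence equal to \<open>S\<close>; writing
  \<open>t = \<sigma>(s)\<^sup>-\<^sup>1\<sigma>(r)\<close> for \<open>t \<in> T\<close> then puts \<open>r\<close> in \<open>S\<close>, so \<open>t\<close> is a unit. Conversely, if all
  left denominator sets of \<open>A\<close> consist of units, then \<open>\<sigma>\<^sup>-\<^sup>1(Units A)\<close> is a left denominator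
  set with the same localization \<open>A\<close>, and it is maximal because \<open>\<sigma>\<close> maps every larger left
  denominator set onto one of \<open>A\<close>.\<close>

lemma Den_lD:
  fixes R (structure)
  assumes "T \<in> Den_l R"
  shows Den_l_subset_carrier: "T \<subseteq> carrier R"
    and Den_l_one: "\<one> \<in> T"
    and Den_l_zero: "\<zero> \<notin> T"
    and Den_l_mult: "\<And>s t. s \<in> T \<Longrightarrow> t \<in> T \<Longrightarrow> s \<otimes> t \<in> T"
    and Den_l_ore: "\<And>r s. r \<in> carrier R \<Longrightarrow> s \<in> T \<Longrightarrow> \<exists>s'\<in>T. \<exists>r'\<in>carrier R. s' \<otimes> r = r' \<otimes> s"
    and Den_l_reversible: "\<And>r s. r \<in> carrier R \<Longrightarrow> s \<in> T \<Longrightarrow> r \<otimes> s = \<zero> \<Longrightarrow> \<exists>t\<in>T. t \<otimes> r = \<zero>"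
  using assms unfolding Den_l_def left_den_def left_ore_def mult_closed_def by blast+

lemma Den_l_mult_closed: "T \<in> Den_l R \<Longrightarrow> mult_closed R T"
  unfolding Den_l_def left_den_def left_ore_def by blast

lemma Den_lI:
  fixes R (structure)
  assumes "T \<subseteq> carrier R" and "\<one> \<in> T" and "\<zero> \<notin> T"
    and "\<And>s t. s \<in> T \<Longrightarrow> t \<in> T \<Longrightarrow> s \<otimes> t \<in> T"
    and "\<And>r s. r \<in> carrier R \<Longrightarrow> s \<in> T \<Longrightarrow> \<exists>s'\<in>T. \<exists>r'\<in>carrier R. s' \<otimes> r = r' \<otimes> s"
    and "\<And>r s. r \<in> carrier R \<Longrightarrow> s \<in> T \<Longrightarrow> r \<otimes> s = \<zero> \<Longrightarrow> \<exists>t\<in>T. t \<otimes> r = \<zero>"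
  shows "T \<in> Den_l R"
  using assms unfolding Den_l_def left_den_def left_ore_def mult_closed_def by blast

lemma (in ring) zero_not_Units:
  assumes "\<one> \<noteq> \<zero>"
  shows "\<zero> \<notin> Units R"
  using assms Units_r_inv Units_inv_closed l_null by metis

lemma (in ring) ass_subset_Units:
  assumes "T \<subseteq> Units R" and "\<one> \<in> T"
  shows "ass R T = {\<zero>}"
proof -
  have "r = \<zero>" if "r \<in> carrier R" "s \<in> T" "s \<otimes> r = \<zero>" for r s
  proof -
    have "s \<in> Units R" using that assms(1) by blast
    with that show "r = \<zero>" using Units_l_cancel[of s r \<zero>] by (simp add: Units_closed)
  qed
  then show ?thesis
    using assms(2) unfolding ass_def by force
qed

lemma (in ring) Units_in_Den_l_at_zero:
  assumes "\<one> \<noteq> \<zero>"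
  shows "Units R \<in> Den_l_at R {\<zero>}"
proof -
  have "Units R \<in> Den_l R"
  proof (rule Den_lI)
    show "\<zero> \<notin> Units R" using zero_not_Units[OF assms] .
    show "\<exists>s'\<in>Units R. \<exists>r'\<in>carrier R. s' \<otimes> r = r' \<otimes> s"
      if "r \<in> carrier R" "s \<in> Units R" for r s
    proof -
      have "\<one> \<otimes> r = (r \<otimes> inv s) \<otimes> s" using that by (simp add: m_assoc Units_closed)
      with that show ?thesis by blast
    qed
    show "\<exists>t\<in>Units R. t \<otimes> r = \<zero>"
      if "r \<in> carrier R" "s \<in> Units R" "r \<otimes> s = \<zero>" for r s
    proof -
      have "r = (r \<otimes> s) \<otimes> inv s" using that(1,2) by (simp add: m_assoc Units_closed)
      with that show ?thesis by (intro bexI[of _ \<one>]) auto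
    qed
  qed auto
  then show ?thesis
    unfolding Den_l_at_def using ass_subset_Units[of "Units R"] by auto
qed

lemma (in ring) is_left_localization_Units_id:
  "is_left_localization R (Units R) R id"
proof -
  have "\<exists>s\<in>Units R. \<exists>r\<in>carrier R. a = inv s \<otimes> r" if "a \<in> carrier R" for a
    using that by (intro bexI[of _ \<one>] bexI[of _ a]) auto
  then show ?thesis
    unfolding is_left_localization_def
    using ring_axioms ass_subset_Units[of "Units R"] by auto
qed

lemma (in ring) left_localization_maximal_iff_Den_l_subset_Units:
  assumes "\<one> \<noteq> \<zero>"
  shows "left_localization_maximal R \<longleftrightarrow> (\<forall>T\<in>Den_l R. T \<subseteq> Units R)"
proof
  assume max: "left_localization_maximal R"
  then obtain S0 where S0: "\<forall>T\<in>Den_l_at R {\<zero>}. T \<subseteq> S0" "is_left_localization R S0 R id"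
    unfolding left_localization_maximal_def Ql_eq_self_def by blast
  have "S0 \<subseteq> Units R"
    using S0(2) unfolding is_left_localization_def by auto
  moreover have "T \<in> Den_l_at R {\<zero>}" if "T \<in> Den_l R" for T
    using max that unfolding left_localization_maximal_def Ass_l_def Den_l_at_def by blast
  ultimately show "\<forall>T\<in>Den_l R. T \<subseteq> Units R"
    using S0(1) by blast
next
  assume U: "\<forall>T\<in>Den_l R. T \<subseteq> Units R"
  have "Ass_l R = {{\<zero>}}"
    unfolding Ass_l_def using U Units_in_Den_l_at_zero[OF assms] Den_l_one[of _ R]
    by (force simp: Den_l_at_def ass_subset_Units)
  moreover have "Ql_eq_self R"
    unfolding Ql_eq_self_def using Units_in_Den_l_at_zero[OF assms] is_left_localization_Units_id U
    by (auto simp: Den_l_at_def)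
  ultimately show "left_localization_maximal R"
    unfolding left_localization_maximal_def by blast
qed

locale left_localization = R: ring R + A: ring A for R (structure) and A +
  fixes \<sigma> :: "'a \<Rightarrow> 'b" and S :: "'a set"
  assumes mult_closed: "mult_closed R S" and localization: "is_left_localization R S A \<sigma>"

lemma left_localizationI:
  assumes "ring R" and "mult_closed R S" and "is_left_localization R S A \<sigma>"
  shows "left_localization R A \<sigma> S"
proof -
  have "ring A" using assms(3) unfolding is_left_localization_def by blast
  with assms show ?thesis by (simp add: left_localization_def left_localization_axioms_def)
qed

sublocale left_localization \<subseteq> ring_hom_ring R A \<sigma>
  using localization unfolding is_left_localization_def
  by (simp add: ring_hom_ring.intro ring_hom_ring_axioms.intro R.ring_axioms)

context left_localization
begin

lemma denominators_subset_carrier: "S \<subseteq> carrier R"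
  using mult_closed unfolding mult_closed_def by (elim conjE)

lemma hom_denominator_Units: "s \<in> S \<Longrightarrow> \<sigma> s \<in> Units A"
  using localization unfolding is_left_localization_def by (elim conjE) blast

lemma localization_kernel: "{r \<in> carrier R. \<sigma> r = \<zero>\<^bsub>A\<^esub>} = ass R S"
  using localization unfolding is_left_localization_def by (elim conjE)

lemma hom_eq_zero_iff:
  assumes "r \<in> carrier R"
  shows "\<sigma> r = \<zero>\<^bsub>A\<^esub> \<longleftrightarrow> (\<exists>v\<in>S. v \<otimes> r = \<zero>)"
  using localization_kernel assms unfolding ass_def by blast

lemma hom_eq_imp_ex_denominator:
  assumes a: "a \<in> carrier R" and b: "b \<in> carrier R" and eq: "\<sigma> a = \<sigma> b"
  shows "\<exists>v\<in>S. v \<otimes> a = v \<otimes> b"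
proof -
  have "\<sigma> (a \<ominus> b) = \<zero>\<^bsub>A\<^esub>"
    using a b eq by (simp add: R.minus_eq A.r_neg)
  then obtain v where v: "v \<in> S" "v \<otimes> (a \<ominus> b) = \<zero>"
    using hom_eq_zero_iff a b by blast
  have vc: "v \<in> carrier R" using v(1) denominators_subset_carrier by blast
  have "v \<otimes> a = v \<otimes> ((a \<ominus> b) \<oplus> b)"
    using a b by (simp add: R.minus_eq R.add.m_assoc R.l_neg)
  also have "\<dots> = v \<otimes> (a \<ominus> b) \<oplus> v \<otimes> b"
    using a b vc by (simp add: R.r_distr)
  also have "\<dots> = v \<otimes> b"
    using v(2) vc b by simp
  finally show ?thesis using v(1) by blast
qed

lemma target_one_neq_zero: "\<one>\<^bsub>A\<^esub> \<noteq> \<zero>\<^bsub>A\<^esub>"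
proof
  assume "\<one>\<^bsub>A\<^esub> = \<zero>\<^bsub>A\<^esub>"
  then obtain v where "v \<in> S" "v \<otimes> \<one> = \<zero>"
    using hom_eq_zero_iff[of \<one>] by auto
  then show False
    using mult_closed denominators_subset_carrier unfolding mult_closed_def by auto
qed

lemma numeratorE:
  assumes "a \<in> carrier A"
  obtains s r where "s \<in> S" and "r \<in> carrier R" and "\<sigma> s \<otimes>\<^bsub>A\<^esub> a = \<sigma> r"
proof -
  obtain s r where sr: "s \<in> S" "r \<in> carrier R" "a = inv\<^bsub>A\<^esub> (\<sigma> s) \<otimes>\<^bsub>A\<^esub> \<sigma> r"
    using localization assms unfolding is_left_localization_def by blast
  then have "\<sigma> s \<otimes>\<^bsub>A\<^esub> a = \<sigma> r"
    using hom_denominator_Units[of s] by (simp add: A.m_assoc[symmetric] A.Units_closed)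
  with sr that show ?thesis by blast
qed

lemma is_left_localization_superset:
  assumes "S \<subseteq> T" and "T \<subseteq> carrier R" and "\<sigma> ` T \<subseteq> Units A"
  shows "is_left_localization R T A \<sigma>"
proof -
  have "\<sigma> r = \<zero>\<^bsub>A\<^esub>" if "r \<in> carrier R" "t \<in> T" "t \<otimes> r = \<zero>" for r t
  proof -
    have t: "t \<in> carrier R" "\<sigma> t \<in> Units A" using that assms(2,3) by auto
    have "\<sigma> t \<otimes>\<^bsub>A\<^esub> \<sigma> r = \<sigma> t \<otimes>\<^bsub>A\<^esub> \<zero>\<^bsub>A\<^esub>"
      using that t by (simp flip: hom_mult)
    with that t show ?thesis by (metis A.Units_l_cancel A.zero_closed hom_closed)
  qed
  then have "{r \<in> carrier R. \<sigma> r = \<zero>\<^bsub>A\<^esub>} = ass R T"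
    using hom_eq_zero_iff assms(1) unfolding ass_def by blast
  moreover have "\<forall>a\<in>carrier A. \<exists>t\<in>T. \<exists>r\<in>carrier R. a = inv\<^bsub>A\<^esub> (\<sigma> t) \<otimes>\<^bsub>A\<^esub> \<sigma> r"
    using localization assms(1) unfolding is_left_localization_def by blast
  ultimately show ?thesis
    using localization assms(3) unfolding is_left_localization_def by auto
qed

lemma Units_preimage_Den_l: "{r \<in> carrier R. \<sigma> r \<in> Units A} \<in> Den_l R"
proof (rule Den_lI)
  show "\<zero> \<notin> {r \<in> carrier R. \<sigma> r \<in> Units A}"
    using A.zero_not_Units[OF target_one_neq_zero] by simp
  show "\<exists>s'\<in>{r \<in> carrier R. \<sigma> r \<in> Units A}. \<exists>r'\<in>carrier R. s' \<otimes> r = r' \<otimes> s"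
    if r: "r \<in> carrier R" and s: "s \<in> {r \<in> carrier R. \<sigma> r \<in> Units A}" for r s
  proof -
    have sc: "s \<in> carrier R" and su: "\<sigma> s \<in> Units A" using s by auto
    obtain t u where t: "t \<in> S" and u: "u \<in> carrier R"
      and tu: "\<sigma> t \<otimes>\<^bsub>A\<^esub> (\<sigma> r \<otimes>\<^bsub>A\<^esub> inv\<^bsub>A\<^esub> (\<sigma> s)) = \<sigma> u"
      using numeratorE[of "\<sigma> r \<otimes>\<^bsub>A\<^esub> inv\<^bsub>A\<^esub> (\<sigma> s)"] r su by auto
    have tc: "t \<in> carrier R" using t denominators_subset_carrier by blast
    have "\<sigma> (t \<otimes> r) = \<sigma> t \<otimes>\<^bsub>A\<^esub> (\<sigma> r \<otimes>\<^bsub>A\<^esub> inv\<^bsub>A\<^esub> (\<sigma> s)) \<otimes>\<^bsub>A\<^esub> \<sigma> s"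
      using tc r su by (simp add: A.m_assoc A.Units_closed)
    also have "\<dots> = \<sigma> (u \<otimes> s)"
      using tu u sc by simp
    finally obtain v where v: "v \<in> S" "v \<otimes> (t \<otimes> r) = v \<otimes> (u \<otimes> s)"
      using hom_eq_imp_ex_denominator tc r u sc by blast
    have vc: "v \<in> carrier R" using v(1) denominators_subset_carrier by blast
    have "v \<otimes> t \<in> {r \<in> carrier R. \<sigma> r \<in> Units A}"
      using vc tc v(1) t hom_denominator_Units by simp
    moreover have "(v \<otimes> t) \<otimes> r = (v \<otimes> u) \<otimes> s"
      using v(2) vc tc r u sc by (simp add: R.m_assoc)
    ultimately show ?thesis using vc u by blast
  qed
  show "\<exists>t\<in>{r \<in> carrier R. \<sigma> r \<in> Units A}. t \<otimes> r = \<zero>"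
    if r: "r \<in> carrier R" and s: "s \<in> {r \<in> carrier R. \<sigma> r \<in> Units A}" and rs: "r \<otimes> s = \<zero>"
    for r s
  proof -
    have sc: "s \<in> carrier R" and su: "\<sigma> s \<in> Units A" using s by auto
    have "\<sigma> r = \<sigma> (r \<otimes> s) \<otimes>\<^bsub>A\<^esub> inv\<^bsub>A\<^esub> (\<sigma> s)"
      using r sc su by (simp add: A.m_assoc A.Units_closed)
    then have "\<sigma> r = \<zero>\<^bsub>A\<^esub>" using rs su by simp
    then show ?thesis
      using hom_eq_zero_iff r denominators_subset_carrier hom_denominator_Units by blast
  qed
qed (auto intro: A.Units_m_closed)

context
  fixes T assumes ST: "S \<subseteq> T" and T: "T \<in> Den_l R"
begin

lemma image_Den_l_ore:
  assumes a: "a \<in> carrier A" and t: "t \<in> T"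
  shows "\<exists>t'\<in>T. \<exists>a'\<in>carrier A. \<sigma> t' \<otimes>\<^bsub>A\<^esub> a = a' \<otimes>\<^bsub>A\<^esub> \<sigma> t"
proof -
  obtain s r where s: "s \<in> S" and r: "r \<in> carrier R" and sr: "\<sigma> s \<otimes>\<^bsub>A\<^esub> a = \<sigma> r"
    using numeratorE[OF a] .
  obtain t' y where t': "t' \<in> T" and y: "y \<in> carrier R" and ore: "t' \<otimes> r = y \<otimes> t"
    using Den_l_ore[OF T r t] by blast
  have c: "s \<in> carrier R" "t' \<in> carrier R" "t \<in> carrier R"
    using s t' t Den_l_subset_carrier[OF T] ST by auto
  have "\<sigma> (t' \<otimes> s) \<otimes>\<^bsub>A\<^esub> a = \<sigma> t' \<otimes>\<^bsub>A\<^esub> (\<sigma> s \<otimes>\<^bsub>A\<^esub> a)"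
    using c a by (simp add: A.m_assoc)
  also have "\<dots> = \<sigma> y \<otimes>\<^bsub>A\<^esub> \<sigma> t"
    using sr ore c r y by (simp flip: hom_mult)
  finally have "\<sigma> (t' \<otimes> s) \<otimes>\<^bsub>A\<^esub> a = \<sigma> y \<otimes>\<^bsub>A\<^esub> \<sigma> t" .
  moreover have "t' \<otimes> s \<in> T" using Den_l_mult[OF T t'] s ST by blast
  ultimately show ?thesis using hom_closed[OF y] by blast
qed

lemma image_Den_l_reversible:
  assumes a: "a \<in> carrier A" and t: "t \<in> T" and at: "a \<otimes>\<^bsub>A\<^esub> \<sigma> t = \<zero>\<^bsub>A\<^esub>"
  shows "\<exists>t'\<in>T. \<sigma> t' \<otimes>\<^bsub>A\<^esub> a = \<zero>\<^bsub>A\<^esub>"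
proof -
  have TR: "T \<subseteq> carrier R" using T by (rule Den_l_subset_carrier)
  obtain s r where s: "s \<in> S" and r: "r \<in> carrier R" and sr: "\<sigma> s \<otimes>\<^bsub>A\<^esub> a = \<sigma> r"
    using numeratorE[OF a] .
  have c: "s \<in> carrier R" "t \<in> carrier R" using s t TR ST by auto
  have "\<sigma> (r \<otimes> t) = \<sigma> s \<otimes>\<^bsub>A\<^esub> (a \<otimes>\<^bsub>A\<^esub> \<sigma> t)"
    using sr[symmetric] r c a by (simp add: A.m_assoc)
  also have "\<dots> = \<zero>\<^bsub>A\<^esub>" using at c by simp
  finally obtain v where v: "v \<in> S" "v \<otimes> (r \<otimes> t) = \<zero>"
    using hom_eq_zero_iff[of "r \<otimes> t"] r c by blast
  have vc: "v \<in> carrier R" using v(1) denominators_subset_carrier by blast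
  have "(v \<otimes> r) \<otimes> t = \<zero>" using v(2) vc r c(2) by (simp add: R.m_assoc)
  then obtain w where w: "w \<in> T" "w \<otimes> (v \<otimes> r) = \<zero>"
    using Den_l_reversible[OF T, of "v \<otimes> r" t] vc r t by blast
  have wc: "w \<in> carrier R" using w(1) TR by blast
  have "\<sigma> (w \<otimes> v \<otimes> s) \<otimes>\<^bsub>A\<^esub> a = \<sigma> (w \<otimes> v) \<otimes>\<^bsub>A\<^esub> (\<sigma> s \<otimes>\<^bsub>A\<^esub> a)"
    using wc vc c a by (simp add: A.m_assoc)
  also have "\<dots> = \<zero>\<^bsub>A\<^esub>"
    using sr w(2) wc vc r by (simp add: R.m_assoc flip: hom_mult)
  finally have "\<sigma> (w \<otimes> v \<otimes> s) \<otimes>\<^bsub>A\<^esub> a = \<zero>\<^bsub>A\<^esub>" .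
  moreover have "w \<otimes> v \<otimes> s \<in> T" using Den_l_mult[OF T] w(1) v(1) s ST by blast
  ultimately show ?thesis by blast
qed

lemma image_Den_l: "\<sigma> ` T \<in> Den_l A"
proof (rule Den_lI)
  have TR: "T \<subseteq> carrier R" using T by (rule Den_l_subset_carrier)
  then show "\<sigma> ` T \<subseteq> carrier A" by auto
  show "\<one>\<^bsub>A\<^esub> \<in> \<sigma> ` T"
    using Den_l_one[OF T] by (metis hom_one image_eqI)
  show "\<zero>\<^bsub>A\<^esub> \<notin> \<sigma> ` T"
  proof
    assume "\<zero>\<^bsub>A\<^esub> \<in> \<sigma> ` T"
    then obtain t where t: "t \<in> T" "\<sigma> t = \<zero>\<^bsub>A\<^esub>" by (metis imageE)
    then obtain v where v: "v \<in> S" "v \<otimes> t = \<zero>"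
      using hom_eq_zero_iff TR by blast
    then have "v \<otimes> t \<in> T" using Den_l_mult[OF T] t(1) ST by blast
    with v(2) show False using Den_l_zero[OF T] by simp
  qed
  show "a \<otimes>\<^bsub>A\<^esub> b \<in> \<sigma> ` T" if ab: "a \<in> \<sigma> ` T" "b \<in> \<sigma> ` T" for a b
  proof -
    obtain s t where st: "s \<in> T" "t \<in> T" and "a = \<sigma> s" "b = \<sigma> t" using ab by blast
    moreover have "s \<in> carrier R" "t \<in> carrier R" using st TR by auto
    ultimately have "a \<otimes>\<^bsub>A\<^esub> b = \<sigma> (s \<otimes> t)" by simp
    with Den_l_mult[OF T st] show ?thesis by blast
  qed
  show "\<exists>t'\<in>\<sigma> ` T. \<exists>a'\<in>carrier A. t' \<otimes>\<^bsub>A\<^esub> a = a' \<otimes>\<^bsub>A\<^esub> b"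
    if a: "a \<in> carrier A" and b: "b \<in> \<sigma> ` T" for a b
  proof -
    obtain t where t: "t \<in> T" "b = \<sigma> t" using b by blast
    then obtain t' where t': "t' \<in> T" "\<exists>a'\<in>carrier A. \<sigma> t' \<otimes>\<^bsub>A\<^esub> a = a' \<otimes>\<^bsub>A\<^esub> b"
      using image_Den_l_ore[OF a t(1)] by blast
    show ?thesis
      using t'(2) imageI[OF t'(1), of \<sigma>] by (rule bexI)
  qed
  show "\<exists>t'\<in>\<sigma> ` T. t' \<otimes>\<^bsub>A\<^esub> a = \<zero>\<^bsub>A\<^esub>"
    if a: "a \<in> carrier A" and b: "b \<in> \<sigma> ` T" and ab: "a \<otimes>\<^bsub>A\<^esub> b = \<zero>\<^bsub>A\<^esub>" for a b
  proof -
    obtain t where t: "t \<in> T" "b = \<sigma> t" using b by blast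
    then obtain t' where t': "t' \<in> T" "\<sigma> t' \<otimes>\<^bsub>A\<^esub> a = \<zero>\<^bsub>A\<^esub>"
      using image_Den_l_reversible[OF a t(1)] ab by blast
    show ?thesis
      using t'(2) imageI[OF t'(1), of \<sigma>] by (rule bexI)
  qed
qed

end

lemma maximal_den_Units_preimage:
  assumes "\<forall>T\<in>Den_l A. T \<subseteq> Units A"
  shows "maximal_den R {r \<in> carrier R. \<sigma> r \<in> Units A}"
  unfolding maximal_den_def
proof (intro conjI ballI impI)
  show "{r \<in> carrier R. \<sigma> r \<in> Units A} \<in> Den_l R" by (rule Units_preimage_Den_l)
  fix T assume T: "T \<in> Den_l R" and sub: "{r \<in> carrier R. \<sigma> r \<in> Units A} \<subseteq> T"
  have "S \<subseteq> T" using sub denominators_subset_carrier hom_denominator_Units by blast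
  then have "\<sigma> ` T \<subseteq> Units A" using image_Den_l T assms by blast
  then show "T = {r \<in> carrier R. \<sigma> r \<in> Units A}"
    using sub Den_l_subset_carrier[OF T] by blast
qed

definition Den_l_pullback :: "'b set \<Rightarrow> 'a set" where
  "Den_l_pullback T = {r \<in> carrier R. (\<exists>b\<in>carrier A. b \<otimes>\<^bsub>A\<^esub> \<sigma> r \<in> T) \<and>
     (\<forall>x\<in>carrier A. x \<otimes>\<^bsub>A\<^esub> \<sigma> r = \<zero>\<^bsub>A\<^esub> \<longrightarrow> (\<exists>t\<in>T. t \<otimes>\<^bsub>A\<^esub> x = \<zero>\<^bsub>A\<^esub>))}"

context
  fixes T assumes T: "T \<in> Den_l A"
begin

lemma Den_l_pullbackI:
  assumes z: "z \<in> carrier R" and u: "u \<in> Units A" and t: "t \<in> T"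
    and eq: "\<sigma> z = u \<otimes>\<^bsub>A\<^esub> t"
  shows "z \<in> Den_l_pullback T"
proof -
  have uc: "u \<in> carrier A" and tc: "t \<in> carrier A"
    using u t Den_l_subset_carrier[OF T] by auto
  have "inv\<^bsub>A\<^esub> u \<otimes>\<^bsub>A\<^esub> \<sigma> z = t"
    using eq u uc tc by (simp add: A.m_assoc[symmetric])
  moreover have "\<exists>t'\<in>T. t' \<otimes>\<^bsub>A\<^esub> x = \<zero>\<^bsub>A\<^esub>"
    if x: "x \<in> carrier A" "x \<otimes>\<^bsub>A\<^esub> \<sigma> z = \<zero>\<^bsub>A\<^esub>" for x
  proof -
    have "(x \<otimes>\<^bsub>A\<^esub> u) \<otimes>\<^bsub>A\<^esub> t = \<zero>\<^bsub>A\<^esub>"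
      using x eq uc tc by (simp add: A.m_assoc)
    then obtain t' where t': "t' \<in> T" "t' \<otimes>\<^bsub>A\<^esub> (x \<otimes>\<^bsub>A\<^esub> u) = \<zero>\<^bsub>A\<^esub>"
      using Den_l_reversible[OF T, of "x \<otimes>\<^bsub>A\<^esub> u" t] x(1) uc t by blast
    have t'c: "t' \<in> carrier A" using t'(1) Den_l_subset_carrier[OF T] by blast
    have "t' \<otimes>\<^bsub>A\<^esub> x = (t' \<otimes>\<^bsub>A\<^esub> (x \<otimes>\<^bsub>A\<^esub> u)) \<otimes>\<^bsub>A\<^esub> inv\<^bsub>A\<^esub> u"
      using t'c x(1) uc u by (simp add: A.m_assoc)
    with t' u show ?thesis by auto
  qed
  ultimately show ?thesis
    unfolding Den_l_pullback_def using z t u by (auto intro!: bexI[of _ "inv\<^bsub>A\<^esub> u"])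
qed

lemma denominators_subset_Den_l_pullback: "S \<subseteq> Den_l_pullback T"
proof
  fix s assume s: "s \<in> S"
  then have "s \<in> carrier R" using denominators_subset_carrier by blast
  then show "s \<in> Den_l_pullback T"
    using Den_l_pullbackI[of s "\<sigma> s" "\<one>\<^bsub>A\<^esub>"] s hom_denominator_Units Den_l_one[OF T] by simp
qed

lemma Den_l_pullback_mult:
  assumes w1: "w1 \<in> Den_l_pullback T" and w2: "w2 \<in> Den_l_pullback T"
  shows "w1 \<otimes> w2 \<in> Den_l_pullback T"
proof -
  have TA: "T \<subseteq> carrier A" using T by (rule Den_l_subset_carrier)
  obtain b1 where b1: "b1 \<in> carrier A" "b1 \<otimes>\<^bsub>A\<^esub> \<sigma> w1 \<in> T"
    using w1 unfolding Den_l_pullback_def by blast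
  obtain b2 where b2: "b2 \<in> carrier A" "b2 \<otimes>\<^bsub>A\<^esub> \<sigma> w2 \<in> T"
    using w2 unfolding Den_l_pullback_def by blast
  have c: "w1 \<in> carrier R" "w2 \<in> carrier R"
    using w1 w2 unfolding Den_l_pullback_def by auto
  obtain t c' where t: "t \<in> T" and c': "c' \<in> carrier A"
    and ore: "t \<otimes>\<^bsub>A\<^esub> b2 = c' \<otimes>\<^bsub>A\<^esub> (b1 \<otimes>\<^bsub>A\<^esub> \<sigma> w1)"
    using Den_l_ore[OF T b2(1) b1(2)] by blast
  have "(c' \<otimes>\<^bsub>A\<^esub> b1) \<otimes>\<^bsub>A\<^esub> \<sigma> (w1 \<otimes> w2) = (c' \<otimes>\<^bsub>A\<^esub> (b1 \<otimes>\<^bsub>A\<^esub> \<sigma> w1)) \<otimes>\<^bsub>A\<^esub> \<sigma> w2"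
    using c b1 c' by (simp add: A.m_assoc)
  also have "\<dots> = t \<otimes>\<^bsub>A\<^esub> (b2 \<otimes>\<^bsub>A\<^esub> \<sigma> w2)"
    using ore t TA b2 c by (simp add: A.m_assoc subsetD flip: ore)
  also have "\<dots> \<in> T" using Den_l_mult[OF T t b2(2)] .
  finally have "(c' \<otimes>\<^bsub>A\<^esub> b1) \<otimes>\<^bsub>A\<^esub> \<sigma> (w1 \<otimes> w2) \<in> T" .
  moreover have "\<exists>t\<in>T. t \<otimes>\<^bsub>A\<^esub> x = \<zero>\<^bsub>A\<^esub>"
    if x: "x \<in> carrier A" "x \<otimes>\<^bsub>A\<^esub> \<sigma> (w1 \<otimes> w2) = \<zero>\<^bsub>A\<^esub>" for x
  proof -
    have "(x \<otimes>\<^bsub>A\<^esub> \<sigma> w1) \<otimes>\<^bsub>A\<^esub> \<sigma> w2 = \<zero>\<^bsub>A\<^esub>"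
      using x c by (simp add: A.m_assoc)
    then obtain t2 where t2: "t2 \<in> T" "t2 \<otimes>\<^bsub>A\<^esub> (x \<otimes>\<^bsub>A\<^esub> \<sigma> w1) = \<zero>\<^bsub>A\<^esub>"
      using w2 x(1) c unfolding Den_l_pullback_def by auto
    have "(t2 \<otimes>\<^bsub>A\<^esub> x) \<otimes>\<^bsub>A\<^esub> \<sigma> w1 = \<zero>\<^bsub>A\<^esub>"
      using t2 TA x(1) c by (simp add: A.m_assoc subsetD)
    then obtain t1 where t1: "t1 \<in> T" "t1 \<otimes>\<^bsub>A\<^esub> (t2 \<otimes>\<^bsub>A\<^esub> x) = \<zero>\<^bsub>A\<^esub>"
      using w1 x(1) t2(1) TA unfolding Den_l_pullback_def by blast
    then have "(t1 \<otimes>\<^bsub>A\<^esub> t2) \<otimes>\<^bsub>A\<^esub> x = \<zero>\<^bsub>A\<^esub>"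
      using t2(1) TA x(1) by (simp add: A.m_assoc subsetD)
    then show ?thesis using Den_l_mult[OF T t1(1) t2(1)] by blast
  qed
  ultimately show ?thesis
    unfolding Den_l_pullback_def using c b1 c' by blast
qed

lemma Den_l_pullback_reversible:
  assumes r: "r \<in> carrier R" and w: "w \<in> Den_l_pullback T" and rw: "r \<otimes> w = \<zero>"
  shows "\<exists>w'\<in>Den_l_pullback T. w' \<otimes> r = \<zero>"
proof -
  have wc: "w \<in> carrier R" using w unfolding Den_l_pullback_def by blast
  have "\<sigma> r \<otimes>\<^bsub>A\<^esub> \<sigma> w = \<zero>\<^bsub>A\<^esub>" using rw r wc by (simp flip: hom_mult)
  then obtain t where t: "t \<in> T" "t \<otimes>\<^bsub>A\<^esub> \<sigma> r = \<zero>\<^bsub>A\<^esub>"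
    using w r unfolding Den_l_pullback_def by auto
  have tc: "t \<in> carrier A" using t(1) Den_l_subset_carrier[OF T] by blast
  obtain s y where s: "s \<in> S" and y: "y \<in> carrier R" and sy: "\<sigma> s \<otimes>\<^bsub>A\<^esub> t = \<sigma> y"
    using numeratorE[OF tc] .
  have sc: "s \<in> carrier R" using s denominators_subset_carrier by blast
  have "\<sigma> (y \<otimes> r) = \<sigma> s \<otimes>\<^bsub>A\<^esub> (t \<otimes>\<^bsub>A\<^esub> \<sigma> r)"
    using sy[symmetric] y r sc tc by (simp add: A.m_assoc)
  also have "\<dots> = \<zero>\<^bsub>A\<^esub>" using t(2) sc by simp
  finally obtain v where v: "v \<in> S" "v \<otimes> (y \<otimes> r) = \<zero>"
    using hom_eq_zero_iff[of "y \<otimes> r"] y r by blast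
  have vc: "v \<in> carrier R" using v(1) denominators_subset_carrier by blast
  have "\<sigma> (v \<otimes> y) = (\<sigma> v \<otimes>\<^bsub>A\<^esub> \<sigma> s) \<otimes>\<^bsub>A\<^esub> t"
    using sy[symmetric] vc y sc tc by (simp add: A.m_assoc)
  moreover have "\<sigma> v \<otimes>\<^bsub>A\<^esub> \<sigma> s \<in> Units A"
    using v(1) s hom_denominator_Units by simp
  ultimately have "v \<otimes> y \<in> Den_l_pullback T"
    using Den_l_pullbackI vc y t(1) by simp
  moreover have "(v \<otimes> y) \<otimes> r = \<zero>" using v(2) vc y r by (simp add: R.m_assoc)
  ultimately show ?thesis by blast
qed

lemma Den_l_pullback_ore:
  assumes r: "r \<in> carrier R" and w: "w \<in> Den_l_pullback T"
  shows "\<exists>w'\<in>Den_l_pullback T. \<exists>r'\<in>carrier R. w' \<otimes> r = r' \<otimes> w"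
proof -
  have TA: "T \<subseteq> carrier A" using T by (rule Den_l_subset_carrier)
  obtain b where b: "b \<in> carrier A" "b \<otimes>\<^bsub>A\<^esub> \<sigma> w \<in> T"
    using w unfolding Den_l_pullback_def by blast
  have wc: "w \<in> carrier R" using w unfolding Den_l_pullback_def by blast
  obtain t a where t: "t \<in> T" and a: "a \<in> carrier A"
    and ore: "t \<otimes>\<^bsub>A\<^esub> \<sigma> r = a \<otimes>\<^bsub>A\<^esub> (b \<otimes>\<^bsub>A\<^esub> \<sigma> w)"
    using Den_l_ore[OF T hom_closed[OF r] b(2)] by blast
  have tc: "t \<in> carrier A" using t TA by blast
  obtain s x where s: "s \<in> S" and x: "x \<in> carrier R" and sx: "\<sigma> s \<otimes>\<^bsub>A\<^esub> (a \<otimes>\<^bsub>A\<^esub> b) = \<sigma> x"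
    using numeratorE[of "a \<otimes>\<^bsub>A\<^esub> b"] a b(1) by auto
  have sc: "s \<in> carrier R" using s denominators_subset_carrier by blast
  obtain s' y where s': "s' \<in> S" and y: "y \<in> carrier R"
    and sy: "\<sigma> s' \<otimes>\<^bsub>A\<^esub> (\<sigma> s \<otimes>\<^bsub>A\<^esub> t) = \<sigma> y"
    using numeratorE[of "\<sigma> s \<otimes>\<^bsub>A\<^esub> t"] sc tc by auto
  have s'c: "s' \<in> carrier R" using s' denominators_subset_carrier by blast
  have "\<sigma> (y \<otimes> r) = \<sigma> s' \<otimes>\<^bsub>A\<^esub> \<sigma> s \<otimes>\<^bsub>A\<^esub> (t \<otimes>\<^bsub>A\<^esub> \<sigma> r)"
    using sy[symmetric] y r s'c sc tc by (simp add: A.m_assoc)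
  also have "\<dots> = \<sigma> s' \<otimes>\<^bsub>A\<^esub> (\<sigma> s \<otimes>\<^bsub>A\<^esub> (a \<otimes>\<^bsub>A\<^esub> b)) \<otimes>\<^bsub>A\<^esub> \<sigma> w"
    using ore s'c sc a b(1) wc by (simp add: A.m_assoc)
  also have "\<dots> = \<sigma> s' \<otimes>\<^bsub>A\<^esub> \<sigma> x \<otimes>\<^bsub>A\<^esub> \<sigma> w"
    by (simp only: sx)
  also have "\<dots> = \<sigma> (s' \<otimes> x \<otimes> w)"
    using s'c x wc by simp
  finally have "\<exists>v\<in>S. v \<otimes> (y \<otimes> r) = v \<otimes> (s' \<otimes> x \<otimes> w)"
    using hom_eq_imp_ex_denominator[of "y \<otimes> r" "s' \<otimes> x \<otimes> w"] y r s'c x wc by simp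
  then obtain v where v: "v \<in> S" "v \<otimes> (y \<otimes> r) = v \<otimes> (s' \<otimes> x \<otimes> w)" ..
  have vc: "v \<in> carrier R" using v(1) denominators_subset_carrier by blast
  have "\<sigma> (v \<otimes> y) = (\<sigma> v \<otimes>\<^bsub>A\<^esub> \<sigma> s' \<otimes>\<^bsub>A\<^esub> \<sigma> s) \<otimes>\<^bsub>A\<^esub> t"
    using sy[symmetric] vc y s'c sc tc by (simp add: A.m_assoc)
  moreover have "\<sigma> v \<otimes>\<^bsub>A\<^esub> \<sigma> s' \<otimes>\<^bsub>A\<^esub> \<sigma> s \<in> Units A"
    using v(1) s' s hom_denominator_Units by simp
  ultimately have "v \<otimes> y \<in> Den_l_pullback T"
    using Den_l_pullbackI vc y t by simp
  moreover have "(v \<otimes> y) \<otimes> r = (v \<otimes> s' \<otimes> x) \<otimes> w"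
    using v(2) vc y r s'c x wc by (simp add: R.m_assoc)
  ultimately show ?thesis using vc s'c x by blast
qed

lemma Den_l_pullback_Den_l: "Den_l_pullback T \<in> Den_l R"
proof (rule Den_lI)
  show "\<zero> \<notin> Den_l_pullback T"
    using Den_l_zero[OF T] unfolding Den_l_pullback_def by auto
  show "\<one> \<in> Den_l_pullback T"
    using denominators_subset_Den_l_pullback mult_closed unfolding mult_closed_def by blast
  show "Den_l_pullback T \<subseteq> carrier R"
    unfolding Den_l_pullback_def by blast
qed (fact Den_l_pullback_mult Den_l_pullback_ore Den_l_pullback_reversible)+

end

lemma maximal_den_imp_Den_l_subset_Units:
  assumes max: "maximal_den R S" and T: "T \<in> Den_l A"
  shows "T \<subseteq> Units A"
proof
  fix t assume t: "t \<in> T"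
  have "Den_l_pullback T = S"
    using max Den_l_pullback_Den_l[OF T] denominators_subset_Den_l_pullback[OF T]
    unfolding maximal_den_def by blast
  obtain s r where s: "s \<in> S" and r: "r \<in> carrier R" and sr: "\<sigma> s \<otimes>\<^bsub>A\<^esub> t = \<sigma> r"
    using numeratorE[of t] t Den_l_subset_carrier[OF T] by blast
  have "r \<in> S"
    using Den_l_pullbackI[OF T r hom_denominator_Units[OF s] t] sr \<open>Den_l_pullback T = S\<close> by simp
  have "t = inv\<^bsub>A\<^esub> (\<sigma> s) \<otimes>\<^bsub>A\<^esub> \<sigma> r"
    using sr[symmetric] s t Den_l_subset_carrier[OF T] hom_denominator_Units[OF s]
    by (simp add: A.m_assoc[symmetric] A.Units_closed subsetD)
  then show "t \<in> Units A"
    using hom_denominator_Units s \<open>r \<in> S\<close> by simp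
qed

end

theorem theorem3p11:
  fixes R :: "('a, 'm) ring_scheme" and A :: "('b, 'n) ring_scheme"
    and \<sigma> :: "'a \<Rightarrow> 'b" and S' :: "'a set" and \<aa> :: "'a set"
  assumes "ring R"
    and "\<aa> \<in> Ass_l R"
    and "S' \<in> Den_l_at R \<aa>"
    and "is_left_localization R S' A \<sigma>"
  shows "max_left_quotient_ring R A \<sigma> \<longleftrightarrow> left_localization_maximal A"
proof
  assume "max_left_quotient_ring R A \<sigma>"
  then obtain S where max: "maximal_den R S" and loc: "is_left_localization R S A \<sigma>"
    unfolding max_left_quotient_ring_def by blast
  interpret left_localization R A \<sigma> S
    using assms(1) max loc by (intro left_localizationI) (auto simp: maximal_den_def Den_l_mult_closed)
  show "left_localization_maximal A"
    using A.left_localization_maximal_iff_Den_l_subset_Units[OF target_one_neq_zero]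
      maximal_den_imp_Den_l_subset_Units[OF max] by blast
next
  assume "left_localization_maximal A"
  interpret left_localization R A \<sigma> S'
    using assms by (intro left_localizationI) (auto simp: Den_l_at_def Den_l_mult_closed)
  have "maximal_den R {r \<in> carrier R. \<sigma> r \<in> Units A}"
    using maximal_den_Units_preimage \<open>left_localization_maximal A\<close>
      A.left_localization_maximal_iff_Den_l_subset_Units[OF target_one_neq_zero] by blast
  moreover have "is_left_localization R {r \<in> carrier R. \<sigma> r \<in> Units A} A \<sigma>"
    using denominators_subset_carrier hom_denominator_Units by (intro is_left_localization_superset) auto
  ultimately show "max_left_quotient_ring R A \<sigma>"
    unfolding max_left_quotient_ring_def by blast
qed

end
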